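(* Let $T$ be a tree of order $n$ with $\operatorname{diam}(T)\geq 4$, and let $T_1$ be a tree obtained from $T$ by a proper generalized tree shift. Then $\mu_1(\overline{T_1})> \mu_1(\overline{T})$, where $\mu_1(G)$ denotes the distance signless Laplacian spectral radius of $G$ and $\overline{G}$ denotes the complement of $G$.
   Context: For a connected graph $G$ with vertices $v_1,\dots,v_n$, the distance matrix $D(G)$ has $(v_i,v_j)$-entry equal to the distance $d_G(v_i,v_j)$. The transmission $\operatorname{Tr}(v_i)=\sum_j d_G(v_i,v_j)$, and $\operatorname{Tr}(G)=\operatorname{diag}(\operatorname{Tr}(v_1),\dots,\operatorname{Tr}(v_n))$. The distance signless Laplacian matrix is $D^Q(G)=\operatorname{Tr}(G)+D(G)$, and $\mu_1(G)$ is its largest eigenvalue. The complement $\overline{G}$ has the same vertex set as $G$, with two distinct vertices adjacent iff they are non-adjacent in $G$. Generalized tree shift (GTS): let $T$ be a tree and $u,v\in V(T)$ such that all interior vertices of the path $uPv$ from $u$ to $v$ in $T$ (if any) have degree $2$. Let $w$ be the neighbor of $v$ on the path $uPv$ (possibly $w=u$). The tree $T_1$ is obtained from $T$ by deleting all edges between $v$ and $N_T(v)\setminus\{w\}$ and adding all edges between $u$ and $N_T(v)\setminus\{w\}$. The GTS is called proper if neither $u$ nor $v$ is a pendant vertex of $T$; in that case $T_1$ has one more pendant vertex than $T$. *)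

theory Defs
  imports Complex_Main
begin

definition simple_graph :: "'a set \<Rightarrow> 'a set set \<Rightarrow> bool" where
  "simple_graph V E \<longleftrightarrow> finite V \<and> E \<subseteq> {{x, y} | x y. x \<in> V \<and> y \<in> V \<and> x \<noteq> y}"

definition walk :: "'a set \<Rightarrow> 'a set set \<Rightarrow> 'a list \<Rightarrow> bool" where
  "walk V E xs \<longleftrightarrow> xs \<noteq> [] \<and> set xs \<subseteq> V \<and>
     (\<forall>i. Suc i < length xs \<longrightarrow> {xs ! i, xs ! Suc i} \<in> E)"

definition connected_graph :: "'a set \<Rightarrow> 'a set set \<Rightarrow> bool" where
  "connected_graph V E \<longleftrightarrow>
     (\<forall>x\<in>V. \<forall>y\<in>V. \<exists>xs. walk V E xs \<and> hd xs = x \<and> last xs = y)"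

definition is_cycle :: "'a set \<Rightarrow> 'a set set \<Rightarrow> 'a list \<Rightarrow> bool" where
  "is_cycle V E xs \<longleftrightarrow> walk V E xs \<and> distinct xs \<and> length xs \<ge> 3 \<and> {last xs, hd xs} \<in> E"

definition is_tree :: "'a set \<Rightarrow> 'a set set \<Rightarrow> bool" where
  "is_tree V E \<longleftrightarrow> simple_graph V E \<and> V \<noteq> {} \<and> connected_graph V E \<and>
     \<not> (\<exists>xs. is_cycle V E xs)"

definition neighbors :: "'a set \<Rightarrow> 'a set set \<Rightarrow> 'a \<Rightarrow> 'a set" where
  "neighbors V E x = {y \<in> V. {x, y} \<in> E}"

definition degree :: "'a set \<Rightarrow> 'a set set \<Rightarrow> 'a \<Rightarrow> nat" where
  "degree V E x = card (neighbors V E x)"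

definition pendant :: "'a set \<Rightarrow> 'a set set \<Rightarrow> 'a \<Rightarrow> bool" where
  "pendant V E x \<longleftrightarrow> degree V E x = 1"

definition dist_G :: "'a set \<Rightarrow> 'a set set \<Rightarrow> 'a \<Rightarrow> 'a \<Rightarrow> nat" where
  "dist_G V E x y = (LEAST n. \<exists>xs. walk V E xs \<and> hd xs = x \<and> last xs = y \<and> length xs = Suc n)"

definition diameter_ge :: "'a set \<Rightarrow> 'a set set \<Rightarrow> nat \<Rightarrow> bool" where
  "diameter_ge V E k \<longleftrightarrow> (\<exists>x\<in>V. \<exists>y\<in>V. dist_G V E x y \<ge> k)"

definition complement :: "'a set \<Rightarrow> 'a set set \<Rightarrow> 'a set set" where
  "complement V E = {{x, y} | x y. x \<in> V \<and> y \<in> V \<and> x \<noteq> y \<and> {x, y} \<notin> E}"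

definition transmission :: "'a set \<Rightarrow> 'a set set \<Rightarrow> 'a \<Rightarrow> real" where
  "transmission V E x = (\<Sum>y\<in>V. real (dist_G V E x y))"

definition dsl_matrix :: "'a set \<Rightarrow> 'a set set \<Rightarrow> 'a \<Rightarrow> 'a \<Rightarrow> real" where
  "dsl_matrix V E x y = (if x = y then transmission V E x else 0) + real (dist_G V E x y)"

definition is_eigenvalue_on :: "'a set \<Rightarrow> ('a \<Rightarrow> 'a \<Rightarrow> real) \<Rightarrow> real \<Rightarrow> bool" where
  "is_eigenvalue_on V M lam \<longleftrightarrow> (\<exists>f :: 'a \<Rightarrow> real. (\<exists>x\<in>V. f x \<noteq> 0) \<and>
      (\<forall>x\<in>V. (\<Sum>y\<in>V. M x y * f y) = lam * f x))"

definition mu1 :: "'a set \<Rightarrow> 'a set set \<Rightarrow> real" where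
  "mu1 V E = Max {lam. is_eigenvalue_on V (dsl_matrix V E) lam}"

definition gts :: "'a set \<Rightarrow> 'a set set \<Rightarrow> 'a \<Rightarrow> 'a \<Rightarrow> 'a set set \<Rightarrow> bool" where
  "gts V E u v E1 \<longleftrightarrow> (\<exists>P. walk V E P \<and> distinct P \<and> length P \<ge> 2 \<and> hd P = u \<and> last P = v \<and>
     (\<forall>i. 0 < i \<and> i < length P - 1 \<longrightarrow> degree V E (P ! i) = 2) \<and>
     (let w = P ! (length P - 2); X = neighbors V E v - {w} in
        E1 = (E - {{v, x} | x. x \<in> X}) \<union> {{u, x} | x. x \<in> X}))"

definition proper_gts :: "'a set \<Rightarrow> 'a set set \<Rightarrow> 'a \<Rightarrow> 'a \<Rightarrow> 'a set set \<Rightarrow> bool" where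
  "proper_gts V E u v E1 \<longleftrightarrow> gts V E u v E1 \<and> \<not> pendant V E u \<and> \<not> pendant V E v"

end

(*
  In a tree T of diameter at least 4 no edge dominates all vertices, so in the complement of T
  two distinct vertices are at distance 1 if they are non-adjacent in T and at distance 2
  otherwise.  Thus D^Q of the complement is determined by T, and its quadratic form is
  x^T D^Q x = 1/2 sum_{a,b} d(a,b) (x_a + x_b)^2.  The complement of the shifted tree T_1 is
  still connected, so its distances are at least the values 1 and 2 computed from T_1.

  Let x be a positive Perron vector for the complement of T.  Moving the branches X at v over
  to u changes the form by sum_{y in X} ((x_u + x_y)^2 - (x_v + x_y)^2) and row u of D^Q x by
  sum_{y in X} (x_u + x_y) > 0.  If x_v <= x_u, the form does not decrease while x ceases to be
  an eigenvector, so mu_1 grows strictly.  If x_u < x_v, moving the branches at u over to v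
  instead increases the form strictly; reflecting the path from u to v maps that tree onto T_1,
  and the reflected vector is a test vector for T_1.
*)

theory Submission
  imports Defs "HOL-Analysis.Analysis" "Jordan_Normal_Form.Char_Poly"
begin

section \<open>Rayleigh quotients of symmetric matrices\<close>

definition quad_form :: "'a set \<Rightarrow> ('a \<Rightarrow> 'a \<Rightarrow> real) \<Rightarrow> ('a \<Rightarrow> real) \<Rightarrow> real" where
  "quad_form V M z = (\<Sum>a\<in>V. \<Sum>b\<in>V. M a b * z a * z b)"

definition sq_norm :: "'a set \<Rightarrow> ('a \<Rightarrow> real) \<Rightarrow> real" where
  "sq_norm V z = (\<Sum>a\<in>V. (z a)\<^sup>2)"

definition mat_vec :: "'a set \<Rightarrow> ('a \<Rightarrow> 'a \<Rightarrow> real) \<Rightarrow> ('a \<Rightarrow> real) \<Rightarrow> 'a \<Rightarrow> real" where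
  "mat_vec V M z a = (\<Sum>b\<in>V. M a b * z b)"

definition symmetric_on :: "'a set \<Rightarrow> ('a \<Rightarrow> 'a \<Rightarrow> real) \<Rightarrow> bool" where
  "symmetric_on V M \<longleftrightarrow> (\<forall>a\<in>V. \<forall>b\<in>V. M a b = M b a)"

definition max_eigenvalue :: "'a set \<Rightarrow> ('a \<Rightarrow> 'a \<Rightarrow> real) \<Rightarrow> real" where
  "max_eigenvalue V M = Max {lam. is_eigenvalue_on V M lam}"

lemma is_eigenvalue_on_iff:
  "is_eigenvalue_on V M lam \<longleftrightarrow> (\<exists>f. (\<exists>a\<in>V. f a \<noteq> 0) \<and> (\<forall>a\<in>V. mat_vec V M f a = lam * f a))"
  unfolding is_eigenvalue_on_def mat_vec_def ..

lemma finite_eigenvalues_on: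
  assumes "finite V"
  shows "finite {lam. is_eigenvalue_on V M lam}"
proof -
  obtain xs where xs: "set xs = V" "distinct xs" using finite_distinct_list[OF assms] by blast
  define n where "n = length xs"
  define A :: "real mat" where "A = Matrix.mat n n (\<lambda>(i, j). M (xs ! i) (xs ! j))"
  have A: "A \<in> carrier_mat n n" unfolding A_def by auto
  have bij: "bij_betw ((!) xs) {..<n} V" using bij_betw_nth[OF xs(2)] xs(1) n_def by auto
  have "{lam. is_eigenvalue_on V M lam} \<subseteq> {x. poly (char_poly A) x = 0}"
  proof
    fix lam assume "lam \<in> {lam. is_eigenvalue_on V M lam}"
    then obtain f where f: "\<exists>a\<in>V. f a \<noteq> 0" "\<forall>a\<in>V. (\<Sum>b\<in>V. M a b * f b) = lam * f a"
      unfolding is_eigenvalue_on_def by auto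
    define w where "w = Matrix.vec n (\<lambda>i. f (xs ! i))"
    have w: "w \<in> carrier_vec n" unfolding w_def by auto
    have "w \<noteq> 0\<^sub>v n"
    proof
      assume "w = 0\<^sub>v n"
      from f(1) obtain i where "i < n" "f (xs ! i) \<noteq> 0" using xs n_def by (metis in_set_conv_nth)
      with \<open>w = 0\<^sub>v n\<close> show False unfolding w_def by (metis index_vec index_zero_vec(1))
    qed
    moreover have "A *\<^sub>v w = lam \<cdot>\<^sub>v w"
    proof (rule eq_vecI)
      fix i assume "i < dim_vec (lam \<cdot>\<^sub>v w)"
      then have i: "i < n" unfolding w_def by auto
      have "(A *\<^sub>v w) $ i = (\<Sum>j<n. M (xs ! i) (xs ! j) * f (xs ! j))"
        using i unfolding A_def w_def by (auto simp: scalar_prod_def Matrix.row_def lessThan_atLeast0)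
      also have "\<dots> = (\<Sum>b\<in>V. M (xs ! i) b * f b)"
        using sum.reindex_bij_betw[OF bij, of "\<lambda>b. M (xs ! i) b * f b"] by simp
      also have "\<dots> = lam * f (xs ! i)" using f(2) i xs n_def by auto
      finally show "(A *\<^sub>v w) $ i = (lam \<cdot>\<^sub>v w) $ i" using i unfolding w_def by auto
    qed (auto simp: A_def w_def)
    ultimately have "eigenvalue A lam" unfolding eigenvalue_def eigenvector_def using w A by auto
    then show "lam \<in> {x. poly (char_poly A) x = 0}" using eigenvalue_root_char_poly[OF A] by auto
  qed
  moreover have "char_poly A \<noteq> 0" using degree_monic_char_poly[OF A] by auto
  ultimately show ?thesis using poly_roots_finite finite_subset by blast
qed

lemma sq_norm_nonneg: "sq_norm V z \<ge> 0"
  unfolding sq_norm_def by (simp add: sum_nonneg)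

lemma sq_norm_eq_0_iff: "finite V \<Longrightarrow> sq_norm V z = 0 \<longleftrightarrow> (\<forall>a\<in>V. z a = 0)"
  unfolding sq_norm_def by (simp add: sum_nonneg_eq_0_iff)

lemma quad_form_scale: "quad_form V M (\<lambda>a. c * z a) = c\<^sup>2 * quad_form V M z"
  unfolding quad_form_def by (simp add: sum_distrib_left power2_eq_square algebra_simps)

lemma sq_norm_scale: "sq_norm V (\<lambda>a. c * z a) = c\<^sup>2 * sq_norm V z"
  unfolding sq_norm_def by (simp add: sum_distrib_left power2_eq_square algebra_simps)

lemma quad_form_eq_sum_mat_vec: "quad_form V M z = (\<Sum>a\<in>V. z a * mat_vec V M z a)"
  unfolding quad_form_def mat_vec_def by (simp add: sum_distrib_left algebra_simps)

lemma quad_form_restrict: "quad_form V M (restrict z V) = quad_form V M z"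
  unfolding quad_form_def by (intro sum.cong refl) auto

lemma sq_norm_restrict: "sq_norm V (restrict z V) = sq_norm V z"
  unfolding sq_norm_def by (intro sum.cong refl) auto

lemma continuous_map_quad_form:
  "finite V \<Longrightarrow> continuous_map (powertop_real V) euclideanreal (quad_form V M)"
  unfolding quad_form_def
  by (intro continuous_map_sum continuous_map_real_mult continuous_map_product_projection
      continuous_map_const[THEN iffD2]) auto

lemma continuous_map_sq_norm: "finite V \<Longrightarrow> continuous_map (powertop_real V) euclideanreal (sq_norm V)"
  unfolding sq_norm_def power2_eq_square
  by (intro continuous_map_sum continuous_map_real_mult continuous_map_product_projection) auto

lemma compactin_unit_sphere:
  assumes "finite V"
  shows "compactin (powertop_real V) (PiE V (\<lambda>_. {-1..1}) \<inter> {z. sq_norm V z = 1})"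
proof -
  have "closedin (powertop_real V) {z \<in> topspace (powertop_real V). sq_norm V z \<in> {1}}"
    using continuous_map_sq_norm[OF assms] by (intro closedin_continuous_map_preimage) auto
  then have "closedin (powertop_real V) {z \<in> PiE V (\<lambda>_. UNIV). sq_norm V z = 1}"
    by simp
  moreover have "compactin (powertop_real V) (PiE V (\<lambda>_. {-1..1::real}))"
    by (simp add: compactin_PiE)
  ultimately have "compactin (powertop_real V) (PiE V (\<lambda>_. {-1..1}) \<inter> {z \<in> PiE V (\<lambda>_. UNIV). sq_norm V z = 1})"
    by (intro compact_Int_closedin)
  moreover have "PiE V (\<lambda>_. {-1..1}) \<inter> {z \<in> PiE V (\<lambda>_. UNIV). sq_norm V z = 1}
      = PiE V (\<lambda>_. {-1..1}) \<inter> {z. sq_norm V z = 1}"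
    by (auto simp: PiE_def Pi_def)
  ultimately show ?thesis by simp
qed

lemma quad_form_max_on_unit_sphere:
  assumes fin: "finite V" and ne: "V \<noteq> {}"
  obtains z0 where "sq_norm V z0 = 1" "\<And>z. sq_norm V z = 1 \<Longrightarrow> quad_form V M z \<le> quad_form V M z0"
proof -
  define S where "S = PiE V (\<lambda>_. {-1..1::real}) \<inter> {z. sq_norm V z = 1}"
  have "compact (quad_form V M ` S)"
    using image_compactin[OF compactin_unit_sphere continuous_map_quad_form] fin unfolding S_def by simp
  have unit: "restrict z V \<in> S" if "sq_norm V z = 1" for z
  proof -
    have "(z a)\<^sup>2 \<le> 1" if "a \<in> V" for a
      using member_le_sum[of a V "\<lambda>a. (z a)\<^sup>2"] fin that \<open>sq_norm V z = 1\<close> by (simp add: sq_norm_def)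
    then have "\<bar>z a\<bar> \<le> 1" if "a \<in> V" for a using that by (simp add: abs_square_le_1)
    then show ?thesis unfolding S_def using that sq_norm_restrict[of V z] by (auto simp: abs_le_iff)
  qed
  obtain a0 where "a0 \<in> V" using ne by auto
  then have "sq_norm V (\<lambda>a. if a = a0 then 1 else 0) = 1"
    unfolding sq_norm_def using fin by (simp add: if_distrib[of "\<lambda>x. x\<^sup>2"] cong: if_cong)
  then have "quad_form V M ` S \<noteq> {}" using unit by blast
  from compact_attains_sup[OF \<open>compact (quad_form V M ` S)\<close> this]
  obtain z0 where z0: "z0 \<in> S" "\<forall>z\<in>S. quad_form V M z \<le> quad_form V M z0"
    by blast
  show ?thesis
  proof
    show "sq_norm V z0 = 1" using z0(1) unfolding S_def by auto
    show "quad_form V M z \<le> quad_form V M z0" if "sq_norm V z = 1" for z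
      using z0(2) unit[OF that] quad_form_restrict[of V M z] by metis
  qed
qed

lemma rayleigh_max_exists:
  assumes fin: "finite V" and ne: "V \<noteq> {}"
  obtains R where "\<And>z. quad_form V M z \<le> R * sq_norm V z" "\<exists>z. sq_norm V z = 1 \<and> quad_form V M z = R"
proof -
  obtain z0 where z0: "sq_norm V z0 = 1" "\<And>z. sq_norm V z = 1 \<Longrightarrow> quad_form V M z \<le> quad_form V M z0"
    using quad_form_max_on_unit_sphere[OF fin ne] by blast
  have "quad_form V M z \<le> quad_form V M z0 * sq_norm V z" for z
  proof (cases "sq_norm V z = 0")
    case True
    then have "\<forall>a\<in>V. z a = 0" using sq_norm_eq_0_iff[OF fin] by blast
    then have "quad_form V M z = 0" unfolding quad_form_def by (auto intro!: sum.neutral)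
    then show ?thesis using True by simp
  next
    case False
    then have pos: "sq_norm V z > 0" using sq_norm_nonneg[of V z] by linarith
    define c where "c = 1 / sqrt (sq_norm V z)"
    have c2: "c\<^sup>2 = 1 / sq_norm V z" unfolding c_def using pos by (simp add: power_divide)
    then have "sq_norm V (\<lambda>a. c * z a) = 1" using pos by (simp add: sq_norm_scale)
    then have "c\<^sup>2 * quad_form V M z \<le> quad_form V M z0"
      using z0(2) quad_form_scale[of V M c z] by metis
    then show ?thesis using pos c2 by (simp add: field_simps)
  qed
  then show ?thesis using that z0(1) by blast
qed

lemma sq_norm_add_scaled:
  "sq_norm V (\<lambda>b. x b + t * y b) = sq_norm V x + 2 * t * (\<Sum>b\<in>V. y b * x b) + t\<^sup>2 * sq_norm V y"
  unfolding sq_norm_def by (simp add: sum.distrib sum_distrib_left power2_eq_square algebra_simps)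

lemma quad_form_add:
  assumes "symmetric_on V M"
  shows "quad_form V M (\<lambda>a. x a + y a)
    = quad_form V M x + 2 * (\<Sum>a\<in>V. y a * mat_vec V M x a) + quad_form V M y"
proof -
  have "(\<Sum>a\<in>V. \<Sum>b\<in>V. M a b * x a * y b) = (\<Sum>a\<in>V. \<Sum>b\<in>V. M a b * y a * x b)"
    using assms unfolding symmetric_on_def by (subst sum.swap) (auto intro!: sum.cong)
  then show ?thesis
    unfolding quad_form_def mat_vec_def
    by (simp add: sum.distrib sum_distrib_left algebra_simps)
qed

lemma quad_form_add_scaled:
  assumes "symmetric_on V M"
  shows "quad_form V M (\<lambda>b. x b + t * y b)
    = quad_form V M x + 2 * t * (\<Sum>b\<in>V. y b * mat_vec V M x b) + t\<^sup>2 * quad_form V M y"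
  using quad_form_add[OF assms, of x "\<lambda>b. t * y b"]
  by (simp add: quad_form_scale sum_distrib_left algebra_simps)

lemma quadratic_nonneg_imp_linear_coeff_zero:
  fixes c n :: real
  assumes "\<And>t. 0 \<le> t\<^sup>2 * c - 2 * t * n" "n \<ge> 0"
  shows "n = 0"
proof (rule ccontr)
  assume "n \<noteq> 0"
  with assms(2) have "n > 0" by simp
  define t where "t = n / (\<bar>c\<bar> + 1)"
  have "t > 0" "t * \<bar>c\<bar> \<le> n" unfolding t_def using \<open>n > 0\<close> by (auto simp: field_simps)
  moreover have "t * c \<le> t * \<bar>c\<bar>" using \<open>t > 0\<close> by (simp add: mult_left_mono)
  ultimately have "t * c \<le> n" by linarith
  then have "t\<^sup>2 * c \<le> t * n" using \<open>t > 0\<close> by (simp add: power2_eq_square mult.assoc)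
  moreover have "t * n > 0" using \<open>t > 0\<close> \<open>n > 0\<close> by simp
  ultimately show False using assms(1)[of t] by linarith
qed

text \<open>A maximiser of the Rayleigh quotient is an eigenvector: perturbing it along the
  residual \<open>y = M x - R x\<close> changes \<open>R |x|\<^sup>2 - x\<^sup>T M x\<close> by \<open>-2 t |y|\<^sup>2 + O(t\<^sup>2)\<close>.\<close>

lemma rayleigh_maximizer_eigenvector:
  assumes fin: "finite V" and sym: "symmetric_on V M"
    and bound: "\<And>z. quad_form V M z \<le> R * sq_norm V z" and max: "quad_form V M x = R * sq_norm V x"
    and a: "a \<in> V"
  shows "mat_vec V M x a = R * x a"
proof -
  define y where "y b = mat_vec V M x b - R * x b" for b
  have cross: "(\<Sum>b\<in>V. y b * mat_vec V M x b) - R * (\<Sum>b\<in>V. y b * x b) = sq_norm V y"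
    unfolding sq_norm_def sum_distrib_left sum_subtractf[symmetric]
    by (intro sum.cong refl) (simp add: y_def power2_eq_square algebra_simps)
  have "0 \<le> R * sq_norm V (\<lambda>b. x b + t * y b) - quad_form V M (\<lambda>b. x b + t * y b)" for t
    using bound by (simp add: algebra_simps)
  also have "\<dots> t = t\<^sup>2 * (R * sq_norm V y - quad_form V M y) - 2 * t * sq_norm V y" for t
    unfolding sq_norm_add_scaled quad_form_add_scaled[OF sym] using max cross by (simp add: algebra_simps)
  finally have "sq_norm V y = 0"
    using quadratic_nonneg_imp_linear_coeff_zero sq_norm_nonneg by blast
  then show ?thesis using a sq_norm_eq_0_iff[OF fin, of y] unfolding y_def by auto
qed

lemma max_eigenvalue_eq_rayleigh_max:
  assumes fin: "finite V" and sym: "symmetric_on V M"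
    and bound: "\<And>z. quad_form V M z \<le> R * sq_norm V z"
    and attained: "sq_norm V x = 1" "quad_form V M x = R"
  shows "max_eigenvalue V M = R"
  unfolding max_eigenvalue_def
proof (rule Max_eqI)
  show "finite {lam. is_eigenvalue_on V M lam}" by (rule finite_eigenvalues_on[OF fin])
  have "\<exists>a\<in>V. x a \<noteq> 0" using attained(1) sq_norm_eq_0_iff[OF fin, of x] by auto
  moreover have "\<forall>a\<in>V. mat_vec V M x a = R * x a"
    using rayleigh_maximizer_eigenvector[OF fin sym bound] attained by simp
  ultimately show "R \<in> {lam. is_eigenvalue_on V M lam}" unfolding is_eigenvalue_on_iff by blast
next
  fix lam assume "lam \<in> {lam. is_eigenvalue_on V M lam}"
  then obtain f where f: "\<exists>a\<in>V. f a \<noteq> 0" "\<forall>a\<in>V. mat_vec V M f a = lam * f a"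
    unfolding is_eigenvalue_on_iff by auto
  have "lam * sq_norm V f = quad_form V M f"
    unfolding quad_form_eq_sum_mat_vec sq_norm_def sum_distrib_left using f(2)
    by (intro sum.cong refl) (simp add: power2_eq_square)
  then have "lam * sq_norm V f \<le> R * sq_norm V f" using bound by simp
  moreover have "sq_norm V f > 0"
    using f(1) sq_norm_eq_0_iff[OF fin, of f] sq_norm_nonneg[of V f] by force
  ultimately show "lam \<le> R" by simp
qed

lemma max_eigenvalue_rayleigh:
  assumes "finite V" "V \<noteq> {}" "symmetric_on V M"
  shows "quad_form V M z \<le> max_eigenvalue V M * sq_norm V z"
    and "\<exists>x. sq_norm V x = 1 \<and> quad_form V M x = max_eigenvalue V M"
proof -
  obtain R where "\<And>z. quad_form V M z \<le> R * sq_norm V z" "\<exists>x. sq_norm V x = 1 \<and> quad_form V M x = R"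
    using rayleigh_max_exists[OF assms(1,2)] by blast
  moreover from this have "max_eigenvalue V M = R"
    using max_eigenvalue_eq_rayleigh_max[OF assms(1,3)] by blast
  ultimately show "quad_form V M z \<le> max_eigenvalue V M * sq_norm V z"
    and "\<exists>x. sq_norm V x = 1 \<and> quad_form V M x = max_eigenvalue V M" by auto
qed

lemma max_eigenvalue_eigenvector:
  assumes "finite V" "V \<noteq> {}" "symmetric_on V M"
    and "quad_form V M x = max_eigenvalue V M" "sq_norm V x = 1" "a \<in> V"
  shows "mat_vec V M x a = max_eigenvalue V M * x a"
  using rayleigh_maximizer_eigenvector[OF assms(1,3) max_eigenvalue_rayleigh(1)[OF assms(1-3)]] assms(4-6)
  by simp

lemma max_eigenvalue_cong:
  "(\<And>a b. a \<in> V \<Longrightarrow> b \<in> V \<Longrightarrow> M a b = N a b) \<Longrightarrow> max_eigenvalue V M = max_eigenvalue V N"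
  unfolding max_eigenvalue_def is_eigenvalue_on_def by (simp cong: sum.cong)

lemma max_eigenvalue_nonneg_maximizer:
  assumes fin: "finite V" and ne: "V \<noteq> {}" and sym: "symmetric_on V M"
    and nonneg: "\<And>a b. a \<in> V \<Longrightarrow> b \<in> V \<Longrightarrow> M a b \<ge> 0"
  obtains x where "\<And>a. x a \<ge> 0" "sq_norm V x = 1" "quad_form V M x = max_eigenvalue V M"
proof -
  obtain z where z: "sq_norm V z = 1" "quad_form V M z = max_eigenvalue V M"
    using max_eigenvalue_rayleigh(2)[OF fin ne sym] by blast
  define x where "x a = \<bar>z a\<bar>" for a
  have nx: "sq_norm V x = 1" using z(1) unfolding sq_norm_def x_def by simp
  have "quad_form V M z \<le> quad_form V M x"
    unfolding quad_form_def x_def mult.assoc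
    by (intro sum_mono mult_left_mono nonneg) (auto simp: abs_mult[symmetric])
  moreover have "quad_form V M x \<le> max_eigenvalue V M"
    using max_eigenvalue_rayleigh(1)[OF fin ne sym, of x] nx by simp
  ultimately show ?thesis using that[of x] nx z(2) unfolding x_def by simp
qed

lemma max_eigenvalue_maximizer_pos:
  assumes fin: "finite V" and ne: "V \<noteq> {}" and sym: "symmetric_on V M"
    and pos: "\<And>a b. a \<in> V \<Longrightarrow> b \<in> V \<Longrightarrow> M a b > 0"
    and x: "\<And>a. x a \<ge> 0" "sq_norm V x = 1" "quad_form V M x = max_eigenvalue V M"
    and a: "a \<in> V"
  shows "x a > 0"
proof -
  obtain b where b: "b \<in> V" "x b > 0"
    using x(1,2) sq_norm_eq_0_iff[OF fin, of x] by (metis less_eq_real_def zero_neq_one)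
  have "0 < M a b * x b" using pos[OF a b(1)] b(2) by simp
  also have "\<dots> \<le> mat_vec V M x a"
    unfolding mat_vec_def using fin b(1) pos[OF a] x(1)
    by (intro member_le_sum) (auto intro: less_imp_le mult_nonneg_nonneg)
  also have "\<dots> = max_eigenvalue V M * x a"
    by (rule max_eigenvalue_eigenvector[OF fin ne sym x(3,2) a])
  finally show ?thesis using x(1)[of a] by (cases "x a = 0") auto
qed

lemma max_eigenvalue_less:
  assumes fin: "finite V" and ne: "V \<noteq> {}" and symA: "symmetric_on V A" and symB: "symmetric_on V B"
    and x: "sq_norm V x = 1" "quad_form V A x = max_eigenvalue V A"
    and le: "quad_form V A x \<le> quad_form V B x"
    and a: "a \<in> V" "mat_vec V A x a < mat_vec V B x a"
  shows "max_eigenvalue V A < max_eigenvalue V B"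
proof -
  have B: "quad_form V B x \<le> max_eigenvalue V B"
    using max_eigenvalue_rayleigh(1)[OF fin ne symB, of x] x(1) by simp
  show ?thesis
  proof (rule ccontr)
    assume "\<not> ?thesis"
    then have "quad_form V B x = max_eigenvalue V B" "max_eigenvalue V B = max_eigenvalue V A"
      using x(2) le B by linarith+
    then have "mat_vec V B x a = mat_vec V A x a"
      using max_eigenvalue_eigenvector[OF fin ne _ _ x(1) a(1)] symA symB x(2) by metis
    then show False using a(2) by simp
  qed
qed

lemma double_sum_reindex:
  assumes "bij_betw f V V"
  shows "(\<Sum>a\<in>V. \<Sum>b\<in>V. g (f a) (f b)) = (\<Sum>a\<in>V. \<Sum>b\<in>V. g a b :: real)"
proof -
  have "(\<Sum>b\<in>V. g c (f b)) = (\<Sum>b\<in>V. g c b)" for c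
    using sum.reindex_bij_betw[OF assms, of "g c"] by simp
  then show ?thesis using sum.reindex_bij_betw[OF assms, of "\<lambda>c. \<Sum>b\<in>V. g c b"] by simp
qed

section \<open>Distance signless Laplacians of symmetric weights\<close>

definition dsl_of :: "'a set \<Rightarrow> ('a \<Rightarrow> 'a \<Rightarrow> real) \<Rightarrow> 'a \<Rightarrow> 'a \<Rightarrow> real" where
  "dsl_of V d a b = (if a = b then (\<Sum>c\<in>V. d a c) else 0) + d a b"

lemma dsl_matrix_eq_dsl_of: "dsl_matrix V E = dsl_of V (\<lambda>a b. real (dist_G V E a b))"
  by (simp add: fun_eq_iff dsl_matrix_def dsl_of_def transmission_def)

lemma symmetric_on_dsl_of: "symmetric_on V d \<Longrightarrow> symmetric_on V (dsl_of W d)"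
  unfolding symmetric_on_def dsl_of_def by auto

lemma dsl_of_cong:
  assumes "\<And>a b. a \<in> V \<Longrightarrow> b \<in> V \<Longrightarrow> d a b = d' a b" "a \<in> V" "b \<in> V"
  shows "dsl_of V d a b = dsl_of V d' a b"
  unfolding dsl_of_def using assms by (simp cong: sum.cong)

lemma dsl_of_pos:
  assumes "finite V" "a \<in> V" "b \<in> V" "c \<in> V" "c \<noteq> a"
    and "\<And>a b. a \<in> V \<Longrightarrow> b \<in> V \<Longrightarrow> d a b \<ge> 0"
    and "\<And>a b. a \<in> V \<Longrightarrow> b \<in> V \<Longrightarrow> a \<noteq> b \<Longrightarrow> d a b > 0"
  shows "dsl_of V d a b > 0"
proof (cases "a = b")
  case True
  have "0 < d a c" using assms by simp
  also have "\<dots> \<le> (\<Sum>c\<in>V. d a c)" using assms by (intro member_le_sum) auto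
  finally show ?thesis using True assms unfolding dsl_of_def by (simp add: add_pos_nonneg)
qed (use assms in \<open>simp add: dsl_of_def\<close>)

lemma quad_form_dsl_of:
  assumes "finite V" "symmetric_on V d"
  shows "2 * quad_form V (dsl_of V d) z = (\<Sum>a\<in>V. \<Sum>b\<in>V. d a b * (z a + z b)\<^sup>2)"
proof -
  have swap: "(\<Sum>a\<in>V. \<Sum>b\<in>V. d a b * (z b)\<^sup>2) = (\<Sum>a\<in>V. \<Sum>b\<in>V. d a b * (z a)\<^sup>2)"
    using assms(2) unfolding symmetric_on_def by (subst sum.swap) (auto intro!: sum.cong)
  have "quad_form V (dsl_of V d) z
      = (\<Sum>a\<in>V. (\<Sum>b\<in>V. if b = a then (\<Sum>c\<in>V. d a c) * z a * z a else 0) + (\<Sum>b\<in>V. d a b * z a * z b))"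
    unfolding quad_form_def dsl_of_def sum.distrib[symmetric] by (intro sum.cong refl) (auto simp: algebra_simps)
  also have "\<dots> = (\<Sum>a\<in>V. \<Sum>b\<in>V. d a b * (z a)\<^sup>2 + d a b * z a * z b)"
    using assms(1) by (simp add: sum.distrib sum_distrib_right power2_eq_square mult.assoc)
  finally show ?thesis
    using swap by (simp add: sum.distrib power2_eq_square algebra_simps sum_distrib_left)
qed

lemma mat_vec_dsl_of:
  assumes "finite V" "a \<in> V"
  shows "mat_vec V (dsl_of V d) z a = (\<Sum>b\<in>V. d a b * (z a + z b))"
proof -
  have "mat_vec V (dsl_of V d) z a
      = (\<Sum>b\<in>V. if b = a then (\<Sum>c\<in>V. d a c) * z a else 0) + (\<Sum>b\<in>V. d a b * z b)"
    unfolding mat_vec_def dsl_of_def sum.distrib[symmetric] by (intro sum.cong refl) (auto simp: distrib_right)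
  then show ?thesis using assms by (simp add: sum.distrib sum_distrib_left sum_distrib_right algebra_simps)
qed

lemma quad_form_dsl_of_mono:
  assumes "finite V" "symmetric_on V d" "symmetric_on V d'"
    and "\<And>a b. a \<in> V \<Longrightarrow> b \<in> V \<Longrightarrow> d a b \<le> d' a b"
  shows "quad_form V (dsl_of V d) z \<le> quad_form V (dsl_of V d') z"
proof -
  have "(\<Sum>a\<in>V. \<Sum>b\<in>V. d a b * (z a + z b)\<^sup>2) \<le> (\<Sum>a\<in>V. \<Sum>b\<in>V. d' a b * (z a + z b)\<^sup>2)"
    using assms(4) by (intro sum_mono mult_right_mono) auto
  then show ?thesis
    using quad_form_dsl_of[OF assms(1,2), of z] quad_form_dsl_of[OF assms(1,3), of z] by linarith
qed

lemma mat_vec_dsl_of_mono: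
  assumes "finite V" "a \<in> V" "\<And>b. b \<in> V \<Longrightarrow> d a b \<le> d' a b" "\<And>b. z b \<ge> 0"
  shows "mat_vec V (dsl_of V d) z a \<le> mat_vec V (dsl_of V d') z a"
  unfolding mat_vec_dsl_of[OF assms(1,2)] using assms(3,4) by (intro sum_mono mult_right_mono) auto

section \<open>Walks, distances and complements\<close>

lemma walk_Nil [simp]: "\<not> walk V E []"
  unfolding walk_def by simp

lemma walk_singleton [simp]: "walk V E [x] \<longleftrightarrow> x \<in> V"
  unfolding walk_def by auto

lemma walk_Cons_Cons [simp]:
  "walk V E (x # y # xs) \<longleftrightarrow> x \<in> V \<and> {x, y} \<in> E \<and> walk V E (y # xs)"
proof -
  have "(\<forall>i. Suc i < length (x # y # xs) \<longrightarrow> Q i) \<longleftrightarrow> Q 0 \<and> (\<forall>i. Suc i < length (y # xs) \<longrightarrow> Q (Suc i))"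
    for Q by (metis Suc_less_eq length_Cons not0_implies_Suc zero_less_Suc)
  then show ?thesis unfolding walk_def by auto
qed

lemma walk_hd_in: "walk V E xs \<Longrightarrow> hd xs \<in> V"
  unfolding walk_def by auto

lemma walk_last_in: "walk V E xs \<Longrightarrow> last xs \<in> V"
  unfolding walk_def by auto

lemma walk_append_tl:
  "walk V E xs \<Longrightarrow> walk V E ys \<Longrightarrow> last xs = hd ys \<Longrightarrow> walk V E (xs @ tl ys)"
proof (induction xs rule: induct_list012)
  case (2 x)
  then show ?case by (cases ys) auto
qed auto

lemma walk_rev: "walk V E xs \<Longrightarrow> walk V E (rev xs)"
proof (induction xs rule: induct_list012)
  case (3 x y zs)
  then have "walk V E [y, x]"
    using walk_hd_in[of V E "y # zs"] by (simp add: insert_commute)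
  with 3 have "walk V E (rev (y # zs) @ tl [y, x])"
    by (intro walk_append_tl) (simp_all add: last_rev)
  then show ?case by simp
qed simp_all

lemma walk_join:
  assumes "walk V E xs" "walk V E ys" "last xs = hd ys"
  shows "walk V E (xs @ tl ys)" "hd (xs @ tl ys) = hd xs" "last (xs @ tl ys) = last ys"
    and "length (xs @ tl ys) = length xs + length ys - 1"
proof -
  have "xs \<noteq> []" "ys \<noteq> []" using assms(1,2) walk_Nil by metis+
  then show "walk V E (xs @ tl ys)" "hd (xs @ tl ys) = hd xs"
    using walk_append_tl[OF assms] by auto
  show "length (xs @ tl ys) = length xs + length ys - 1"
    using \<open>ys \<noteq> []\<close> by (cases ys) auto
  show "last (xs @ tl ys) = last ys"
    using \<open>ys \<noteq> []\<close> assms(3) by (cases ys) (auto simp: last_append)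
qed

lemma walk_snoc: "walk V E xs \<Longrightarrow> {last xs, y} \<in> E \<Longrightarrow> y \<in> V \<Longrightarrow> walk V E (xs @ [y])"
  using walk_append_tl[of V E xs "[last xs, y]"] walk_last_in[of V E xs] by simp

definition reachable :: "'a set \<Rightarrow> 'a set set \<Rightarrow> 'a \<Rightarrow> 'a \<Rightarrow> bool" where
  "reachable V E a b \<longleftrightarrow> (\<exists>xs. walk V E xs \<and> hd xs = a \<and> last xs = b)"

lemma dist_G_le:
  assumes "walk V E xs" "hd xs = a" "last xs = b"
  shows "dist_G V E a b \<le> length xs - 1"
  unfolding dist_G_def
proof (rule Least_le)
  have "length xs = Suc (length xs - 1)" using assms(1) by (cases xs) auto
  then show "\<exists>ys. walk V E ys \<and> hd ys = a \<and> last ys = b \<and> length ys = Suc (length xs - 1)"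
    using assms by metis
qed

lemma dist_G_witness:
  assumes "reachable V E a b"
  obtains xs where "walk V E xs" "hd xs = a" "last xs = b" "length xs = Suc (dist_G V E a b)"
proof -
  from assms obtain xs where "walk V E xs" "hd xs = a" "last xs = b" unfolding reachable_def by auto
  then have "\<exists>n xs. walk V E xs \<and> hd xs = a \<and> last xs = b \<and> length xs = Suc n"
    by (intro exI[of _ "length xs - 1"] exI[of _ xs]) (cases xs, auto)
  then have "\<exists>xs. walk V E xs \<and> hd xs = a \<and> last xs = b \<and> length xs = Suc (dist_G V E a b)"
    unfolding dist_G_def by (rule LeastI_ex)
  then show ?thesis using that by blast
qed

lemma dist_G_le_1_imp:
  assumes "reachable V E a b" "dist_G V E a b \<le> 1"
  shows "a = b \<or> {a, b} \<in> E"
proof -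
  obtain xs where xs: "walk V E xs" "hd xs = a" "last xs = b" "length xs \<le> 2"
    using dist_G_witness[OF assms(1)] assms(2) by (metis Suc_1 Suc_le_mono)
  then consider x where "xs = [x]" | x y where "xs = [x, y]"
    by (cases xs rule: remdups_adj.cases) auto
  then show ?thesis using xs by cases auto
qed

lemma dist_G_sym: "dist_G V E a b = dist_G V E b a"
proof -
  have rev: "\<exists>ys. walk V E ys \<and> hd ys = b \<and> last ys = a \<and> length ys = m"
    if "walk V E xs" "hd xs = a" "last xs = b" "length xs = m" for a b xs m
    using that walk_rev by (intro exI[of _ "rev xs"]) (auto simp: hd_rev last_rev)
  have "(\<exists>xs. walk V E xs \<and> hd xs = a \<and> last xs = b \<and> length xs = Suc n)
      \<longleftrightarrow> (\<exists>xs. walk V E xs \<and> hd xs = b \<and> last xs = a \<and> length xs = Suc n)" for n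
    using rev[of _ a b] rev[of _ b a] by blast
  then show ?thesis unfolding dist_G_def by (simp only:)
qed

lemma symmetric_on_dist_G: "symmetric_on V (\<lambda>a b. real (dist_G W E a b))"
  unfolding symmetric_on_def using dist_G_sym by metis

lemma symmetric_on_dsl_matrix: "symmetric_on V (dsl_matrix W E)"
  unfolding dsl_matrix_eq_dsl_of by (rule symmetric_on_dsl_of[OF symmetric_on_dist_G])

lemma dist_G_pos:
  assumes "reachable V E a b" "a \<noteq> b"
  shows "dist_G V E a b \<ge> 1"
proof (rule ccontr)
  assume "\<not> ?thesis"
  then obtain xs where "hd xs = a" "last xs = b" "length xs = 1"
    using dist_G_witness[OF assms(1)] by (metis One_nat_def less_one not_le)
  then show False using assms(2) by (cases xs) auto
qed

lemma simple_graph_edge: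
  "simple_graph V E \<Longrightarrow> {a, b} \<in> E \<Longrightarrow> a \<in> V \<and> b \<in> V \<and> a \<noteq> b"
  unfolding simple_graph_def by (auto simp: doubleton_eq_iff)

lemma simple_graph_no_loop: "simple_graph V E \<Longrightarrow> {a} \<notin> E"
  using simple_graph_edge[of V E a a] by (metis insert_absorb2)

lemma neighbors_pendant: "neighbors V E c = {d} \<Longrightarrow> pendant V E c"
  unfolding pendant_def Defs.degree_def by simp

definition dominating_edge :: "'a set \<Rightarrow> 'a set set \<Rightarrow> 'a \<Rightarrow> 'a \<Rightarrow> bool" where
  "dominating_edge V E p q \<longleftrightarrow> p \<in> V \<and> q \<in> V \<and> {p, q} \<in> E \<and>
     (\<forall>c\<in>V. c = p \<or> c = q \<or> {c, p} \<in> E \<or> {c, q} \<in> E)"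

lemma dominating_edge_walk_to_end:
  assumes dom: "dominating_edge V E p q" and c: "c \<in> V"
  obtains h ys where "h \<in> {p, q}" "walk V E ys" "hd ys = c" "last ys = h" "length ys \<le> 2"
proof -
  from dom c consider "c = p \<or> c = q" | "{c, p} \<in> E" | "{c, q} \<in> E"
    unfolding dominating_edge_def by blast
  then show ?thesis
  proof cases
    case 1 then show ?thesis using that[of c "[c]"] c by auto
  next
    case 2 then show ?thesis using that[of p "[c, p]"] c dom unfolding dominating_edge_def by auto
  next
    case 3 then show ?thesis using that[of q "[c, q]"] c dom unfolding dominating_edge_def by auto
  qed
qed

lemma dominating_edge_walk:
  assumes dom: "dominating_edge V E p q" and "a \<in> V" "b \<in> V"
  obtains xs where "walk V E xs" "hd xs = a" "last xs = b" "length xs \<le> 4"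
proof -
  obtain ha ys where ys: "ha \<in> {p, q}" "walk V E ys" "hd ys = a" "last ys = ha" "length ys \<le> 2"
    using dominating_edge_walk_to_end[OF dom \<open>a \<in> V\<close>] by blast
  obtain hb zs where zs: "hb \<in> {p, q}" "walk V E zs" "hd zs = b" "last zs = hb" "length zs \<le> 2"
    using dominating_edge_walk_to_end[OF dom \<open>b \<in> V\<close>] by blast
  obtain ms where ms: "walk V E ms" "hd ms = ha" "last ms = hb" "length ms \<le> 2"
  proof (cases "ha = hb")
    case True
    then show ?thesis using that[of "[ha]"] ys(1) dom unfolding dominating_edge_def by auto
  next
    case False
    then have "{ha, hb} \<in> E" using ys(1) zs(1) dom unfolding dominating_edge_def by (auto simp: insert_commute)
    then show ?thesis using that[of "[ha, hb]"] ys(1) zs(1) dom unfolding dominating_edge_def by auto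
  qed
  note w = walk_join[OF ys(2) ms(1)] ys(4) ms(2)
  have "walk V E (rev zs)" "hd (rev zs) = hb" "last (rev zs) = b" "length (rev zs) \<le> 2"
    using walk_rev[OF zs(2)] zs by (simp_all add: hd_rev last_rev)
  note ww = walk_join[OF w(1) this(1)] w ms this
  show ?thesis using that[OF ww(1)] ww ys by simp
qed

lemma dominating_edge_reachable:
  "dominating_edge V E p q \<Longrightarrow> a \<in> V \<Longrightarrow> b \<in> V \<Longrightarrow> reachable V E a b"
  unfolding reachable_def by (metis dominating_edge_walk)

lemma diameter_ge_4_no_dominating_edge:
  assumes "diameter_ge V E 4"
  shows "\<not> dominating_edge V E p q"
proof
  assume "dominating_edge V E p q"
  from assms obtain x y where xy: "x \<in> V" "y \<in> V" "dist_G V E x y \<ge> 4"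
    unfolding diameter_ge_def by blast
  obtain xs where "walk V E xs" "hd xs = x" "last xs = y" "length xs \<le> 4"
    using dominating_edge_walk[OF \<open>dominating_edge V E p q\<close> xy(1,2)] by blast
  then show False using dist_G_le[of V E xs x y] xy(3) by linarith
qed

lemma complement_iff: "{a, b} \<in> complement V E \<longleftrightarrow> a \<in> V \<and> b \<in> V \<and> a \<noteq> b \<and> {a, b} \<notin> E"
  unfolding complement_def by (auto simp: doubleton_eq_iff insert_commute)

definition two_step_dist :: "'a set set \<Rightarrow> 'a \<Rightarrow> 'a \<Rightarrow> real" where
  "two_step_dist E a b = (if a = b then 0 else 1) + (if {a, b} \<in> E then 1 else 0)"

lemma symmetric_on_two_step_dist: "symmetric_on V (two_step_dist E)"
  unfolding symmetric_on_def two_step_dist_def by (simp add: insert_commute)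

lemma two_step_dist_le_dist_complement:
  assumes "\<And>c. {c} \<notin> E" and reach: "reachable V (complement V E) a b"
  shows "two_step_dist E a b \<le> dist_G V (complement V E) a b"
proof (cases "a = b")
  case False
  then have "dist_G V (complement V E) a b \<ge> 1" using dist_G_pos[OF reach] by simp
  moreover have "dist_G V (complement V E) a b \<ge> 2" if "{a, b} \<in> E"
    using dist_G_le_1_imp[OF reach] False that complement_iff[of a b V E] by fastforce
  ultimately show ?thesis unfolding two_step_dist_def using False by auto
qed (simp add: two_step_dist_def assms(1))

lemma dist_complement_eq_two_step_dist:
  assumes E: "simple_graph V E" and diam: "diameter_ge V E 4" and "a \<in> V" "b \<in> V"
  shows "dist_G V (complement V E) a b = two_step_dist E a b"
proof -
  let ?C = "complement V E"
  have "\<exists>xs. walk V ?C xs \<and> hd xs = a \<and> last xs = b \<and> length xs - 1 \<le> two_step_dist E a b"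
  proof (cases "a = b \<or> {a, b} \<notin> E")
    case True
    then show ?thesis using assms
      by (intro exI[of _ "if a = b then [a] else [a, b]"]) (auto simp: complement_iff two_step_dist_def)
  next
    case False
    then obtain z where z: "z \<in> V" "z \<noteq> a" "z \<noteq> b" "{z, a} \<notin> E" "{z, b} \<notin> E"
      using diameter_ge_4_no_dominating_edge[OF diam, of a b] assms unfolding dominating_edge_def
      by (auto simp: insert_commute)
    then show ?thesis using assms False
      by (intro exI[of _ "[a, z, b]"]) (auto simp: complement_iff two_step_dist_def insert_commute)
  qed
  then obtain xs where xs: "walk V ?C xs" "hd xs = a" "last xs = b" "length xs - 1 \<le> two_step_dist E a b"
    by blast
  then have "dist_G V ?C a b \<le> two_step_dist E a b"
    using dist_G_le[OF xs(1-3)] by (meson of_nat_le_iff order_trans)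
  moreover have "two_step_dist E a b \<le> dist_G V ?C a b"
    using two_step_dist_le_dist_complement[OF simple_graph_no_loop[OF E]] xs(1-3)
    unfolding reachable_def by blast
  ultimately show ?thesis by linarith
qed

section \<open>Moving branches from one vertex to another\<close>

lemma sum_sum_if_first:
  assumes "finite V" "c \<in> V" "X \<subseteq> V"
  shows "(\<Sum>a\<in>V. \<Sum>b\<in>V. if a = c \<and> b \<in> X then g a b else 0) = (\<Sum>x\<in>X. g c x :: real)"
proof -
  have "(\<Sum>a\<in>V. \<Sum>b\<in>V. if a = c \<and> b \<in> X then g a b else 0)
      = (\<Sum>a\<in>V. if a = c then (\<Sum>b\<in>V. if b \<in> X then g a b else 0) else 0)"
    by (intro sum.cong refl) auto
  also have "\<dots> = (\<Sum>b\<in>V. if b \<in> X then g c b else 0)"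
    using assms(1,2) by simp
  also have "\<dots> = (\<Sum>x\<in>X. g c x)"
    using assms(1,3) by (simp add: sum.inter_restrict[symmetric] Int_absorb1)
  finally show ?thesis .
qed

lemma sum_sum_if_second:
  assumes "finite V" "c \<in> V" "X \<subseteq> V"
  shows "(\<Sum>a\<in>V. \<Sum>b\<in>V. if b = c \<and> a \<in> X then g a b else 0) = (\<Sum>x\<in>X. g x c :: real)"
  using sum_sum_if_first[OF assms, of "\<lambda>b a. g a b"] by (subst sum.swap) (simp add: conj_commute)

definition star_edges :: "'a \<Rightarrow> 'a set \<Rightarrow> 'a set set" where
  "star_edges c X = (\<lambda>x. {c, x}) ` X"

lemma mem_star_edges_iff: "{a, b} \<in> star_edges c X \<longleftrightarrow> (a = c \<and> b \<in> X) \<or> (b = c \<and> a \<in> X)"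
  unfolding star_edges_def by (auto simp: doubleton_eq_iff)

lemma image_star_edges: "(`) f ` star_edges c X = star_edges (f c) (f ` X)"
  unfolding star_edges_def by (simp add: image_image)

lemma star_edges_Un: "star_edges c (X \<union> Y) = star_edges c X \<union> star_edges c Y"
  unfolding star_edges_def by auto

locale branch_move =
  fixes E :: "'a set set" and u v :: 'a and X :: "'a set"
  assumes u_ne_v: "u \<noteq> v" and u_notin_X: "u \<notin> X" and v_notin_X: "v \<notin> X"
    and v_edge: "\<And>x. x \<in> X \<Longrightarrow> {v, x} \<in> E" and u_non_edge: "\<And>x. x \<in> X \<Longrightarrow> {u, x} \<notin> E"
begin

definition moved :: "'a set set" where
  "moved = (E - star_edges v X) \<union> star_edges u X"

lemma two_step_dist_moved:
  "two_step_dist moved a b = two_step_dist E a b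
     - (if a = v \<and> b \<in> X then 1 else 0) - (if b = v \<and> a \<in> X then 1 else 0)
     + (if a = u \<and> b \<in> X then 1 else 0) + (if b = u \<and> a \<in> X then 1 else 0)"
proof -
  have "{a, b} \<in> moved \<longleftrightarrow> ({a, b} \<in> E \<and> \<not> ((a = v \<and> b \<in> X) \<or> (b = v \<and> a \<in> X)))
      \<or> (a = u \<and> b \<in> X) \<or> (b = u \<and> a \<in> X)"
    unfolding moved_def by (auto simp: mem_star_edges_iff)
  moreover have "{a, b} \<in> E" if "(a = v \<and> b \<in> X) \<or> (b = v \<and> a \<in> X)"
    using that v_edge by (auto simp: insert_commute)
  moreover have "{a, b} \<notin> E" if "(a = u \<and> b \<in> X) \<or> (b = u \<and> a \<in> X)"
    using that u_non_edge by (auto simp: insert_commute)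
  moreover have "\<not> (((a = v \<and> b \<in> X) \<or> (b = v \<and> a \<in> X)) \<and> ((a = u \<and> b \<in> X) \<or> (b = u \<and> a \<in> X)))"
    using u_ne_v u_notin_X v_notin_X by blast
  moreover have "a \<noteq> b" if "(a = v \<and> b \<in> X) \<or> (b = v \<and> a \<in> X) \<or> (a = u \<and> b \<in> X) \<or> (b = u \<and> a \<in> X)"
    using that u_notin_X v_notin_X by blast
  ultimately show ?thesis
    unfolding two_step_dist_def by (smt (verit))
qed

lemma sum_two_step_dist_moved:
  assumes "finite V" "X \<subseteq> V" "u \<in> V" "v \<in> V"
  shows "(\<Sum>a\<in>V. \<Sum>b\<in>V. two_step_dist moved a b * f a b)
    = (\<Sum>a\<in>V. \<Sum>b\<in>V. two_step_dist E a b * f a b) + (\<Sum>x\<in>X. f u x + f x u - f v x - f x v)"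
proof -
  have "two_step_dist moved a b * f a b = two_step_dist E a b * f a b
      - (if a = v \<and> b \<in> X then f a b else 0) - (if b = v \<and> a \<in> X then f a b else 0)
      + (if a = u \<and> b \<in> X then f a b else 0) + (if b = u \<and> a \<in> X then f a b else 0)" for a b
    unfolding two_step_dist_moved by (simp add: algebra_simps)
  then have "(\<Sum>a\<in>V. \<Sum>b\<in>V. two_step_dist moved a b * f a b)
    = (\<Sum>a\<in>V. \<Sum>b\<in>V. two_step_dist E a b * f a b)
      - (\<Sum>a\<in>V. \<Sum>b\<in>V. if a = v \<and> b \<in> X then f a b else 0)
      - (\<Sum>a\<in>V. \<Sum>b\<in>V. if b = v \<and> a \<in> X then f a b else 0)
      + (\<Sum>a\<in>V. \<Sum>b\<in>V. if a = u \<and> b \<in> X then f a b else 0)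
      + (\<Sum>a\<in>V. \<Sum>b\<in>V. if b = u \<and> a \<in> X then f a b else 0)"
    by (simp only: sum.distrib sum_subtractf)
  then show ?thesis
    using assms by (simp add: sum_sum_if_first sum_sum_if_second sum.distrib sum_subtractf)
qed

lemma row_two_step_dist_moved:
  assumes "finite V" "X \<subseteq> V"
  shows "(\<Sum>b\<in>V. two_step_dist moved u b * h b) = (\<Sum>b\<in>V. two_step_dist E u b * h b) + (\<Sum>x\<in>X. h x)"
proof -
  have "two_step_dist moved u b * h b = two_step_dist E u b * h b + (if b \<in> X then h b else 0)" for b
    unfolding two_step_dist_moved using u_ne_v u_notin_X by (simp add: algebra_simps)
  then show ?thesis
    using assms by (simp add: sum.distrib sum.inter_restrict[symmetric] Int_absorb1)
qed

lemma quad_form_moved: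
  assumes "finite V" "X \<subseteq> V" "u \<in> V" "v \<in> V"
  shows "quad_form V (dsl_of V (two_step_dist moved)) z
    = quad_form V (dsl_of V (two_step_dist E)) z + (\<Sum>x\<in>X. (z u + z x)\<^sup>2 - (z v + z x)\<^sup>2)"
  using quad_form_dsl_of[OF assms(1) symmetric_on_two_step_dist, of moved z]
    quad_form_dsl_of[OF assms(1) symmetric_on_two_step_dist, of E z]
    sum_two_step_dist_moved[OF assms, of "\<lambda>a b. (z a + z b)\<^sup>2"]
  by (simp add: add.commute sum_distrib_left[symmetric] sum.distrib[symmetric] sum_subtractf)

lemma mat_vec_moved:
  assumes "finite V" "X \<subseteq> V" "u \<in> V"
  shows "mat_vec V (dsl_of V (two_step_dist moved)) z u
    = mat_vec V (dsl_of V (two_step_dist E)) z u + (\<Sum>x\<in>X. z u + z x)"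
  unfolding mat_vec_dsl_of[OF assms(1,3)] by (rule row_two_step_dist_moved[OF assms(1,2)])

end

section \<open>Generalized tree shifts\<close>

definition path_edges :: "'a list \<Rightarrow> 'a set set" where
  "path_edges P = {{P ! i, P ! Suc i} | i. Suc i < length P}"

locale tree_path =
  fixes V :: "'a set" and E :: "'a set set" and P :: "'a list"
  assumes tree: "is_tree V E" and walk_P: "walk V E P" and distinct_P: "distinct P"
    and length_P: "length P \<ge> 2"
    and interior_degree: "\<forall>i. 0 < i \<and> i < length P - 1 \<longrightarrow> Defs.degree V E (P ! i) = 2"
begin

definition pu :: 'a where "pu = hd P"
definition pv :: 'a where "pv = last P"
definition pw :: 'a where "pw = P ! (length P - 2)"
definition Xu :: "'a set" where "Xu = neighbors V E pu - {P ! 1}"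
definition Xv :: "'a set" where "Xv = neighbors V E pv - {pw}"

lemma simple: "simple_graph V E"
  using tree unfolding is_tree_def by blast

lemma finite_V: "finite V"
  using simple unfolding simple_graph_def by blast

lemma edge_in_V: "{a, b} \<in> E \<Longrightarrow> a \<in> V \<and> b \<in> V \<and> a \<noteq> b"
  using simple_graph_edge[OF simple] .

lemma no_loop: "{a} \<notin> E"
  using simple_graph_no_loop[OF simple] .

lemma no_cycle: "\<not> is_cycle V E xs"
  using tree unfolding is_tree_def by blast

lemma set_P: "set P \<subseteq> V"
  using walk_P unfolding walk_def by blast

lemma path_edge: "Suc i < length P \<Longrightarrow> {P ! i, P ! Suc i} \<in> E"
  using walk_P unfolding walk_def by blast

lemma P_nth_eq_iff: "i < length P \<Longrightarrow> j < length P \<Longrightarrow> P ! i = P ! j \<longleftrightarrow> i = j"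
  using distinct_P by (simp add: nth_eq_iff_index_eq)

lemma P_nonempty: "P \<noteq> []"
  using length_P by auto

lemma pu_nth: "pu = P ! 0"
  unfolding pu_def using length_P by (cases P) auto

lemma pv_nth: "pv = P ! (length P - 1)"
  unfolding pv_def using length_P by (cases P) (auto simp: last_conv_nth)

lemma pu_ne_pv: "pu \<noteq> pv"
  unfolding pu_nth pv_nth using length_P P_nth_eq_iff[of 0 "length P - 1"] by linarith

lemma pu_in_P: "pu \<in> set P" and pv_in_P: "pv \<in> set P"
  unfolding pu_nth pv_nth using length_P by (auto intro!: nth_mem)

lemma pv_pw_edge: "{pv, pw} \<in> E"
  using path_edge[of "length P - 2"] length_P
  unfolding pv_nth pw_def by (simp add: Suc_diff_Suc numeral_2_eq_2 insert_commute)

lemma pu_P1_edge: "{pu, P ! 1} \<in> E"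
  using path_edge[of 0] length_P unfolding pu_nth by simp

lemma Xu_subset: "Xu \<subseteq> V" and Xv_subset: "Xv \<subseteq> V"
  unfolding Xu_def Xv_def neighbors_def by auto

lemma pu_in_V: "pu \<in> V" and pv_in_V: "pv \<in> V"
  using pu_in_P pv_in_P set_P by auto

lemma V_nonempty: "V \<noteq> {}"
  using pu_in_V by blast

lemma pw_in_V: "pw \<in> V"
  using edge_in_V[OF pv_pw_edge] by blast

lemma interior_neighbor:
  assumes i: "0 < i" "i < length P - 1" and e: "{P ! i, b} \<in> E"
  shows "b = P ! (i - 1) \<or> b = P ! Suc i"
proof (rule ccontr)
  assume b: "\<not> ?thesis"
  have e1: "{P ! i, P ! (i - 1)} \<in> E" and e2: "{P ! i, P ! Suc i} \<in> E"
    using path_edge[of "i - 1"] path_edge[of i] i by (simp_all add: insert_commute)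
  have "{P ! (i - 1), P ! Suc i, b} \<subseteq> neighbors V E (P ! i)"
    using edge_in_V[OF e] edge_in_V[OF e1] edge_in_V[OF e2] e e1 e2 unfolding neighbors_def by blast
  moreover have "P ! (i - 1) \<noteq> P ! Suc i" using P_nth_eq_iff[of "i - 1" "Suc i"] i by simp
  then have "card {P ! (i - 1), P ! Suc i, b} = 3" using b by auto
  moreover have "finite (neighbors V E (P ! i))"
    using finite_V unfolding neighbors_def by simp
  ultimately have "3 \<le> Defs.degree V E (P ! i)"
    unfolding Defs.degree_def by (metis card_mono)
  then show False using interior_degree i by auto
qed

text \<open>Interior vertices of the path have degree 2, and an edge between its ends would close a cycle.\<close>

lemma path_chord:
  assumes ij: "i < j" "j < length P" and e: "{P ! i, P ! j} \<in> E"
  shows "j = Suc i"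
proof (cases "0 < i")
  case True
  then have "P ! j = P ! (i - 1) \<or> P ! j = P ! Suc i"
    using interior_neighbor[OF True _ e] ij by linarith
  moreover have "P ! j \<noteq> P ! (i - 1)" using P_nth_eq_iff[of j "i - 1"] ij by simp
  ultimately show ?thesis using P_nth_eq_iff[of j "Suc i"] ij by simp
next
  case False
  then have i: "i = 0" by simp
  show ?thesis
  proof (cases "j < length P - 1")
    case True
    have "{P ! j, P ! 0} \<in> E" using e i by (simp add: insert_commute)
    then have "P ! 0 = P ! (j - 1) \<or> P ! 0 = P ! Suc j"
      using interior_neighbor[of j "P ! 0"] True ij i by simp
    moreover have "P ! 0 \<noteq> P ! Suc j" using P_nth_eq_iff[of 0 "Suc j"] True by fastforce
    ultimately have "P ! 0 = P ! (j - 1)" by blast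
    moreover have "0 < length P" "j - 1 < length P" using ij by auto
    ultimately show ?thesis using P_nth_eq_iff[of 0 "j - 1"] ij i by simp
  next
    case False
    then have j: "j = length P - 1" using ij by simp
    show ?thesis
    proof (rule ccontr)
      assume "j \<noteq> Suc i"
      then have "length P \<ge> 3" using i j ij by linarith
      moreover have "{last P, hd P} \<in> E"
        using e i j pu_nth pv_nth unfolding pu_def pv_def by (simp add: insert_commute)
      ultimately have "is_cycle V E P"
        using walk_P distinct_P unfolding is_cycle_def by blast
      then show False using no_cycle by blast
    qed
  qed
qed

lemma path_edge_iff:
  assumes "i < length P" "j < length P"
  shows "{P ! i, P ! j} \<in> E \<longleftrightarrow> i = Suc j \<or> j = Suc i"
proof
  assume e: "{P ! i, P ! j} \<in> E"
  then have "i \<noteq> j" using edge_in_V by blast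
  then consider "i < j" | "j < i" by linarith
  then show "i = Suc j \<or> j = Suc i"
  proof cases
    case 1 then show ?thesis using path_chord assms e by blast
  next
    case 2 then show ?thesis using path_chord[of j i] assms e by (simp add: insert_commute)
  qed
next
  assume "i = Suc j \<or> j = Suc i"
  then show "{P ! i, P ! j} \<in> E" using path_edge assms by (auto simp: insert_commute)
qed

lemma Xv_off_path: "x \<in> Xv \<Longrightarrow> x \<notin> set P"
proof
  assume x: "x \<in> Xv" "x \<in> set P"
  then obtain k where k: "k < length P" "x = P ! k" by (auto simp: in_set_conv_nth)
  have "{P ! (length P - 1), P ! k} \<in> E" using x(1) k unfolding Xv_def neighbors_def pv_nth by simp
  then have "k = length P - 2" using path_edge_iff[of "length P - 1" k] k(1) length_P by fastforce
  then show False using x(1) k unfolding Xv_def pw_def by simp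
qed

lemma Xu_off_path: "x \<in> Xu \<Longrightarrow> x \<notin> set P"
proof
  assume x: "x \<in> Xu" "x \<in> set P"
  then obtain k where k: "k < length P" "x = P ! k" by (auto simp: in_set_conv_nth)
  have "{P ! 0, P ! k} \<in> E" using x(1) k unfolding Xu_def neighbors_def pu_nth by simp
  then have "k = 1" using path_edge_iff[of 0 k] k(1) length_P by fastforce
  then show False using x(1) k unfolding Xu_def by simp
qed

lemma pu_Xv_non_edge: "x \<in> Xv \<Longrightarrow> {pu, x} \<notin> E"
proof
  assume x: "x \<in> Xv" and e: "{pu, x} \<in> E"
  have "walk V E (P @ [x])"
    using walk_snoc[OF walk_P] x edge_in_V[OF e] unfolding Xv_def neighbors_def pv_def by auto
  moreover have "distinct (P @ [x])" using distinct_P Xv_off_path[OF x] by simp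
  moreover have "{last (P @ [x]), hd (P @ [x])} \<in> E"
    using e length_P unfolding pu_def by (cases P) (auto simp: insert_commute)
  ultimately have "is_cycle V E (P @ [x])" using length_P unfolding is_cycle_def by simp
  then show False using no_cycle by blast
qed

lemma pv_Xu_non_edge: "x \<in> Xu \<Longrightarrow> {pv, x} \<notin> E"
proof
  assume x: "x \<in> Xu" and e: "{pv, x} \<in> E"
  have "walk V E (x # P)"
    using walk_P x edge_in_V[OF e] length_P unfolding Xu_def neighbors_def pu_def
    by (cases P) (auto simp: insert_commute)
  moreover have "distinct (x # P)" using distinct_P Xu_off_path[OF x] by simp
  moreover have "{last (x # P), hd (x # P)} \<in> E"
    using e length_P unfolding pv_def by (cases P) auto
  ultimately have "is_cycle V E (x # P)" using length_P unfolding is_cycle_def by simp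
  then show False using no_cycle by blast
qed

sublocale branch_move E pu pv Xv
  using pu_ne_pv Xv_off_path pu_in_P pv_in_P pu_Xv_non_edge no_loop
  by unfold_locales (auto simp: Xv_def neighbors_def)

sublocale opposite: branch_move E pv pu Xu
  using pu_ne_pv Xu_off_path pu_in_P pv_in_P pv_Xu_non_edge no_loop
  by unfold_locales (auto simp: Xu_def neighbors_def)

lemma edge_leaving_path:
  assumes c: "c \<in> set P" and d: "d \<notin> set P" and e: "{c, d} \<in> E"
  shows "(c = pu \<and> d \<in> Xu) \<or> (c = pv \<and> d \<in> Xv)"
proof -
  obtain i where i: "i < length P" "c = P ! i" using c by (auto simp: in_set_conv_nth)
  have "P ! 1 \<in> set P" "pw \<in> set P" using length_P unfolding pw_def by auto
  moreover have "d \<in> V" using edge_in_V[OF e] by blast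
  moreover have "\<not> (0 < i \<and> i < length P - 1)"
    using interior_neighbor[of i d] e d i by auto
  then have "i = 0 \<or> i = length P - 1" using i(1) by linarith
  ultimately show ?thesis
    using i e d unfolding Xu_def Xv_def neighbors_def pu_nth pv_nth by auto
qed

definition off_path_edges :: "'a set set" where
  "off_path_edges = {e \<in> E. e \<inter> set P = {}}"

lemma edges_decomp: "E = off_path_edges \<union> path_edges P \<union> star_edges pu Xu \<union> star_edges pv Xv"
proof
  show "off_path_edges \<union> path_edges P \<union> star_edges pu Xu \<union> star_edges pv Xv \<subseteq> E"
    using path_edge unfolding off_path_edges_def path_edges_def star_edges_def Xu_def Xv_def neighbors_def
    by auto
  show "E \<subseteq> off_path_edges \<union> path_edges P \<union> star_edges pu Xu \<union> star_edges pv Xv"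
  proof
    fix e assume "e \<in> E"
    then obtain c d where e: "e = {c, d}" "{c, d} \<in> E" using simple unfolding simple_graph_def by blast
    consider "c \<notin> set P" "d \<notin> set P" | "c \<in> set P" "d \<in> set P" | "c \<in> set P" "d \<notin> set P"
      | "c \<notin> set P" "d \<in> set P" by blast
    then show "e \<in> off_path_edges \<union> path_edges P \<union> star_edges pu Xu \<union> star_edges pv Xv"
    proof cases
      case 1 then show ?thesis using e unfolding off_path_edges_def by auto
    next
      case 2
      then obtain i j where "i < length P" "j < length P" "c = P ! i" "d = P ! j"
        by (auto simp: in_set_conv_nth)
      then show ?thesis using e path_edge_iff unfolding path_edges_def by (auto simp: insert_commute)
    next
      case 3 then show ?thesis using e edge_leaving_path[of c d] by (auto simp: star_edges_def)
    next
      case 4 then show ?thesis using e edge_leaving_path[of d c] by (auto simp: star_edges_def insert_commute)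
    qed
  qed
qed

lemma star_edges_disjoint:
  "star_edges pv Xv \<inter> (off_path_edges \<union> path_edges P \<union> star_edges pu Xu) = {}"
  "star_edges pu Xu \<inter> (off_path_edges \<union> path_edges P \<union> star_edges pv Xv) = {}"
  using pu_ne_pv pu_in_P pv_in_P Xu_off_path Xv_off_path
  unfolding star_edges_def off_path_edges_def path_edges_def
  by (auto simp: doubleton_eq_iff) (metis nth_mem Suc_lessD)+

lemma moved_decomp: "moved = off_path_edges \<union> path_edges P \<union> star_edges pu (Xu \<union> Xv)"
  using edges_decomp star_edges_disjoint(1) unfolding moved_def star_edges_Un by blast

lemma opposite_moved_decomp: "opposite.moved = off_path_edges \<union> path_edges P \<union> star_edges pv (Xv \<union> Xu)"
  using edges_decomp star_edges_disjoint(2) unfolding opposite.moved_def star_edges_Un by blast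

lemma Xv_nonempty: "\<not> pendant V E pv \<Longrightarrow> Xv \<noteq> {}"
  using neighbors_pendant[of V E pv pw] pv_pw_edge edge_in_V[OF pv_pw_edge]
  unfolding Xv_def neighbors_def by blast

lemma Xu_nonempty: "\<not> pendant V E pu \<Longrightarrow> Xu \<noteq> {}"
  using neighbors_pendant[of V E pu "P ! 1"] pu_P1_edge edge_in_V[OF pu_P1_edge]
  unfolding Xu_def neighbors_def by blast

text \<open>Reversing the path \<open>P\<close> and fixing all other vertices exchanges \<open>u\<close> and \<open>v\<close>; it maps the
  shifted tree onto the tree \<open>opposite.moved\<close>, in which the branches at \<open>u\<close> are moved to \<open>v\<close>.\<close>

definition reflect :: "'a \<Rightarrow> 'a" where
  "reflect c = (case map_of (zip P (rev P)) c of None \<Rightarrow> c | Some d \<Rightarrow> d)"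

lemma reflect_nth: "i < length P \<Longrightarrow> reflect (P ! i) = P ! (length P - Suc i)"
  unfolding reflect_def using map_of_zip_nth[of P "rev P" i] distinct_P by (simp add: rev_nth)

lemma reflect_off_path: "c \<notin> set P \<Longrightarrow> reflect c = c"
proof -
  assume "c \<notin> set P"
  then have "map_of (zip P (rev P)) c = None" using map_of_zip_is_None[of P "rev P" c] by simp
  then show ?thesis unfolding reflect_def by (simp only: option.case)
qed

lemma reflect_reflect [simp]: "reflect (reflect c) = c"
proof (cases "c \<in> set P")
  case True
  then obtain i where i: "i < length P" "c = P ! i" by (auto simp: in_set_conv_nth)
  then show ?thesis using reflect_nth[of i] reflect_nth[of "length P - Suc i"] by simp
qed (simp add: reflect_off_path)

lemma reflect_in_P_iff: "reflect c \<in> set P \<longleftrightarrow> c \<in> set P"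
proof (cases "c \<in> set P")
  case True
  then obtain i where "i < length P" "c = P ! i" by (auto simp: in_set_conv_nth)
  then show ?thesis using reflect_nth[of i] by simp
qed (simp add: reflect_off_path)

lemma reflect_pu: "reflect pu = pv"
  using reflect_nth[of 0] P_nonempty unfolding pu_nth pv_nth by simp

lemma bij_betw_reflect: "bij_betw reflect V V"
proof -
  have "reflect c \<in> V" if "c \<in> V" for c
    using that set_P reflect_in_P_iff[of c] reflect_off_path[of c] by auto
  then show ?thesis by (intro bij_betw_byWitness[of _ reflect]) auto
qed

lemma image_reflect_path_edges: "(`) reflect ` path_edges P \<subseteq> path_edges P"
proof
  fix e assume "e \<in> (`) reflect ` path_edges P"
  then obtain i where i: "Suc i < length P" "e = reflect ` {P ! i, P ! Suc i}"
    unfolding path_edges_def by auto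
  define j where "j = length P - Suc (Suc i)"
  have "Suc j < length P" "reflect (P ! i) = P ! Suc j" "reflect (P ! Suc i) = P ! j"
    using i(1) reflect_nth[of i] reflect_nth[of "Suc i"] unfolding j_def by (auto simp: Suc_diff_Suc)
  then show "e \<in> path_edges P" using i(2) unfolding path_edges_def by (auto simp: insert_commute)
qed

lemma image_image_reflect [simp]: "reflect ` reflect ` e = e"
  by (simp add: image_image)

lemma image_reflect_off_path: "e \<inter> set P = {} \<Longrightarrow> reflect ` e = e"
  using reflect_off_path by (metis disjoint_iff image_cong image_ident)

lemma image_reflect_moved: "(`) reflect ` moved = opposite.moved"
proof -
  have off: "(`) reflect ` off_path_edges = off_path_edges"
    unfolding off_path_edges_def using image_reflect_off_path by (force simp: image_iff)
  have "e \<in> (`) reflect ` path_edges P" if "e \<in> path_edges P" for e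
    using image_reflect_path_edges that by (intro image_eqI[of e _ "reflect ` e"]) auto
  then have path: "(`) reflect ` path_edges P = path_edges P"
    using image_reflect_path_edges by blast
  have "reflect ` (Xu \<union> Xv) = Xv \<union> Xu"
    using Xu_off_path Xv_off_path image_reflect_off_path[of "Xu \<union> Xv"] by blast
  then have star: "(`) reflect ` star_edges pu (Xu \<union> Xv) = star_edges pv (Xv \<union> Xu)"
    using image_star_edges[of reflect pu] reflect_pu by simp
  show ?thesis unfolding moved_decomp opposite_moved_decomp image_Un off path star ..
qed

lemma reflect_edge_moved_iff: "{reflect a, reflect b} \<in> moved \<longleftrightarrow> {a, b} \<in> opposite.moved"
proof -
  have "{a, b} \<in> (`) reflect ` moved \<longleftrightarrow> reflect ` {a, b} \<in> moved"
  proof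
    assume "{a, b} \<in> (`) reflect ` moved"
    then obtain e where "e \<in> moved" "{a, b} = reflect ` e" by blast
    then show "reflect ` {a, b} \<in> moved" by simp
  next
    assume "reflect ` {a, b} \<in> moved"
    then show "{a, b} \<in> (`) reflect ` moved" by (intro image_eqI[of _ _ "reflect ` {a, b}"]) simp_all
  qed
  then show ?thesis unfolding image_reflect_moved by simp
qed

lemma moved_pv_edge: "{pv, y} \<in> moved \<Longrightarrow> y = pw"
proof -
  assume e: "{pv, y} \<in> moved"
  have "pv \<notin> Xv" using Xv_off_path pv_in_P by blast
  then have "{pv, y} \<in> E" "y \<notin> Xv"
    using e pu_ne_pv unfolding moved_def by (auto simp: mem_star_edges_iff)
  then show "y = pw" using edge_in_V unfolding Xv_def neighbors_def by auto
qed

lemma moved_no_loop: "{a} \<notin> moved"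
  using no_loop Xv_off_path pu_in_P unfolding moved_def star_edges_def by (auto simp: doubleton_eq_iff)

lemma complement_moved_dominating_edge:
  assumes "diameter_ge V E 4"
  obtains z where "dominating_edge V (complement V moved) pv z"
proof -
  let ?C = "complement V moved"
  obtain z where z: "z \<in> V" "z \<noteq> pv" "z \<noteq> pw" "{z, pv} \<notin> E" "{z, pw} \<notin> E"
    using diameter_ge_4_no_dominating_edge[OF assms, of pv pw] pv_pw_edge pv_in_V pw_in_V
    unfolding dominating_edge_def by (auto simp: insert_commute)
  have "z \<notin> Xv" "pw \<notin> Xv"
    using z(4) unfolding Xv_def neighbors_def by (auto simp: insert_commute)
  then have "{pw, z} \<notin> moved"
    using z(5) unfolding moved_def by (auto simp: mem_star_edges_iff insert_commute)
  then have pwz: "{pw, z} \<in> ?C" using z pw_in_V by (simp add: complement_iff)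
  have pvz: "{pv, z} \<in> ?C" using z moved_pv_edge pv_in_V by (auto simp: complement_iff)
  have "c = pv \<or> c = z \<or> {c, pv} \<in> ?C \<or> {c, z} \<in> ?C" if "c \<in> V" for c
  proof (cases "c = pv \<or> {c, pv} \<in> ?C")
    case False
    then have "{pv, c} \<in> moved" using that pv_in_V by (auto simp: complement_iff insert_commute)
    then show ?thesis using moved_pv_edge pwz by blast
  qed blast
  then show ?thesis using that pvz pv_in_V z(1) unfolding dominating_edge_def by blast
qed

lemma two_step_dist_le_dist_complement_moved:
  assumes "diameter_ge V E 4" "a \<in> V" "b \<in> V"
  shows "two_step_dist moved a b \<le> dist_G V (complement V moved) a b"
  using complement_moved_dominating_edge[OF assms(1)] dominating_edge_reachable assms(2,3)
    two_step_dist_le_dist_complement[OF moved_no_loop] by metis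

lemma two_step_dist_reflect:
  "two_step_dist moved (reflect a) (reflect b) = two_step_dist opposite.moved a b"
proof -
  have "reflect a = reflect b \<longleftrightarrow> a = b" by (metis reflect_reflect)
  then show ?thesis unfolding two_step_dist_def reflect_edge_moved_iff by simp
qed

lemma quad_form_reflect:
  "quad_form V (dsl_of V (two_step_dist moved)) (\<lambda>a. z (reflect a))
    = quad_form V (dsl_of V (two_step_dist opposite.moved)) z"
proof -
  let ?h = "\<lambda>a b. two_step_dist opposite.moved a b * (z a + z b)\<^sup>2"
  have "2 * quad_form V (dsl_of V (two_step_dist moved)) (\<lambda>a. z (reflect a))
      = (\<Sum>a\<in>V. \<Sum>b\<in>V. ?h (reflect a) (reflect b))"
    unfolding quad_form_dsl_of[OF finite_V symmetric_on_two_step_dist]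
    by (simp flip: two_step_dist_reflect)
  also have "\<dots> = (\<Sum>a\<in>V. \<Sum>b\<in>V. ?h a b)"
    by (rule double_sum_reindex[OF bij_betw_reflect])
  also have "\<dots> = 2 * quad_form V (dsl_of V (two_step_dist opposite.moved)) z"
    unfolding quad_form_dsl_of[OF finite_V symmetric_on_two_step_dist] ..
  finally show ?thesis by simp
qed

lemma sq_norm_reflect: "sq_norm V (\<lambda>a. z (reflect a)) = sq_norm V z"
  unfolding sq_norm_def using sum.reindex_bij_betw[OF bij_betw_reflect, of "\<lambda>a. (z a)\<^sup>2"] by simp

lemma quad_form_dsl_complement_moved_ge:
  assumes "diameter_ge V E 4"
  shows "quad_form V (dsl_of V (two_step_dist moved)) z \<le> quad_form V (dsl_matrix V (complement V moved)) z"
  unfolding dsl_matrix_eq_dsl_of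
  using two_step_dist_le_dist_complement_moved[OF assms]
  by (rule quad_form_dsl_of_mono[OF finite_V symmetric_on_two_step_dist symmetric_on_dist_G])

lemma mat_vec_dsl_complement_moved_ge:
  assumes "diameter_ge V E 4" "a \<in> V" "\<And>b. z b \<ge> 0"
  shows "mat_vec V (dsl_of V (two_step_dist moved)) z a \<le> mat_vec V (dsl_matrix V (complement V moved)) z a"
  unfolding dsl_matrix_eq_dsl_of
  using two_step_dist_le_dist_complement_moved[OF assms(1,2)] assms(3)
  by (rule mat_vec_dsl_of_mono[OF finite_V assms(2)])

lemma max_eigenvalue_moved_gt_if_pv_le_pu:
  assumes diam: "diameter_ge V E 4" and Xv: "Xv \<noteq> {}"
    and x: "\<And>a. x a \<ge> 0" "\<And>a. a \<in> V \<Longrightarrow> x a > 0" "sq_norm V x = 1"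
      "quad_form V (dsl_of V (two_step_dist E)) x = max_eigenvalue V (dsl_of V (two_step_dist E))"
    and le: "x pv \<le> x pu"
  shows "max_eigenvalue V (dsl_of V (two_step_dist E)) < max_eigenvalue V (dsl_matrix V (complement V moved))"
proof -
  let ?A = "dsl_of V (two_step_dist E)" and ?M = "dsl_of V (two_step_dist moved)"
    and ?B = "dsl_matrix V (complement V moved)"
  have "(x pv + x y)\<^sup>2 \<le> (x pu + x y)\<^sup>2" for y
    using le x(1)[of pv] x(1)[of y] by (intro power_mono) auto
  then have "quad_form V ?A x \<le> quad_form V ?M x"
    unfolding quad_form_moved[OF finite_V Xv_subset pu_in_V pv_in_V] by (simp add: sum_nonneg)
  also have "\<dots> \<le> quad_form V ?B x" by (rule quad_form_dsl_complement_moved_ge[OF diam])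
  finally have qf: "quad_form V ?A x \<le> quad_form V ?B x" .
  have "0 < (\<Sum>y\<in>Xv. x pu + x y)"
    using Xv finite_subset[OF Xv_subset finite_V] x(2) pu_in_V Xv_subset by (intro sum_pos add_pos_pos) auto
  then have "mat_vec V ?A x pu < mat_vec V ?M x pu"
    unfolding mat_vec_moved[OF finite_V Xv_subset pu_in_V] by simp
  also have "\<dots> \<le> mat_vec V ?B x pu" by (rule mat_vec_dsl_complement_moved_ge[OF diam pu_in_V x(1)])
  finally have row: "mat_vec V ?A x pu < mat_vec V ?B x pu" .
  show ?thesis
    by (rule max_eigenvalue_less[OF finite_V V_nonempty symmetric_on_dsl_of[OF symmetric_on_two_step_dist]
          symmetric_on_dsl_matrix x(3,4) qf pu_in_V row])
qed

lemma max_eigenvalue_moved_gt_if_pu_lt_pv: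
  assumes diam: "diameter_ge V E 4" and Xu: "Xu \<noteq> {}"
    and x: "\<And>a. x a \<ge> 0" "\<And>a. a \<in> V \<Longrightarrow> x a > 0" "sq_norm V x = 1"
      "quad_form V (dsl_of V (two_step_dist E)) x = max_eigenvalue V (dsl_of V (two_step_dist E))"
    and lt: "x pu < x pv"
  shows "max_eigenvalue V (dsl_of V (two_step_dist E)) < max_eigenvalue V (dsl_matrix V (complement V moved))"
proof -
  let ?A = "dsl_of V (two_step_dist E)" and ?y = "\<lambda>a. x (reflect a)"
    and ?B = "dsl_matrix V (complement V moved)"
  have "(x pu + x a)\<^sup>2 < (x pv + x a)\<^sup>2" if "a \<in> Xu" for a
    using lt x(1)[of pu] x(1)[of a] by (intro power_strict_mono) auto
  then have "0 < (\<Sum>a\<in>Xu. (x pv + x a)\<^sup>2 - (x pu + x a)\<^sup>2)"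
    using Xu finite_subset[OF Xu_subset finite_V] by (intro sum_pos) auto
  then have "max_eigenvalue V ?A < quad_form V (dsl_of V (two_step_dist opposite.moved)) x"
    unfolding opposite.quad_form_moved[OF finite_V Xu_subset pv_in_V pu_in_V] x(4) by simp
  also have "\<dots> = quad_form V (dsl_of V (two_step_dist moved)) ?y"
    by (rule quad_form_reflect[symmetric])
  also have "\<dots> \<le> quad_form V ?B ?y"
    by (rule quad_form_dsl_complement_moved_ge[OF diam])
  also have "\<dots> \<le> max_eigenvalue V ?B"
    using max_eigenvalue_rayleigh(1)[OF finite_V V_nonempty symmetric_on_dsl_matrix, where z = ?y]
      sq_norm_reflect[of x] x(3) by simp
  finally show ?thesis .
qed

lemma dsl_of_two_step_dist_pos:
  assumes "a \<in> V" "b \<in> V"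
  shows "dsl_of V (two_step_dist E) a b > 0"
proof -
  have "\<exists>c\<in>V. c \<noteq> a" using pu_in_V pv_in_V pu_ne_pv by metis
  then show ?thesis
    using dsl_of_pos[OF finite_V assms] by (auto simp: two_step_dist_def)
qed

lemma max_eigenvalue_complement_moved_gt:
  assumes diam: "diameter_ge V E 4" and "Xu \<noteq> {}" "Xv \<noteq> {}"
  shows "max_eigenvalue V (dsl_matrix V (complement V E))
    < max_eigenvalue V (dsl_matrix V (complement V moved))"
proof -
  let ?A = "dsl_of V (two_step_dist E)"
  have symA: "symmetric_on V ?A" by (rule symmetric_on_dsl_of[OF symmetric_on_two_step_dist])
  have A: "max_eigenvalue V (dsl_matrix V (complement V E)) = max_eigenvalue V ?A"
    unfolding dsl_matrix_eq_dsl_of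
    by (intro max_eigenvalue_cong dsl_of_cong) (simp_all add: dist_complement_eq_two_step_dist[OF simple diam])
  obtain x where x: "\<And>a. x a \<ge> 0" "sq_norm V x = 1" "quad_form V ?A x = max_eigenvalue V ?A"
    using max_eigenvalue_nonneg_maximizer[OF finite_V V_nonempty symA] dsl_of_two_step_dist_pos
    by (metis less_imp_le)
  have "x a > 0" if "a \<in> V" for a
    using max_eigenvalue_maximizer_pos[OF finite_V V_nonempty symA dsl_of_two_step_dist_pos x that] .
  then show ?thesis
    unfolding A using max_eigenvalue_moved_gt_if_pv_le_pu[OF diam \<open>Xv \<noteq> {}\<close> x(1) _ x(2,3)]
      max_eigenvalue_moved_gt_if_pu_lt_pv[OF diam \<open>Xu \<noteq> {}\<close> x(1) _ x(2,3)]
    by (cases "x pv \<le> x pu") auto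
qed

end

theorem mainTheorem2:
  fixes V :: "'a set" and E E1 :: "'a set set" and u v :: 'a
  assumes "is_tree V E"
    and "diameter_ge V E 4"
    and "proper_gts V E u v E1"
  shows "mu1 V (complement V E1) > mu1 V (complement V E)"
proof -
  obtain P where P: "walk V E P" "distinct P" "length P \<ge> 2" "hd P = u" "last P = v"
      "\<forall>i. 0 < i \<and> i < length P - 1 \<longrightarrow> Defs.degree V E (P ! i) = 2"
    and E1: "E1 = (E - {{v, x} | x. x \<in> neighbors V E v - {P ! (length P - 2)}})
                 \<union> {{u, x} | x. x \<in> neighbors V E v - {P ! (length P - 2)}}"
    and nonpendant: "\<not> pendant V E u" "\<not> pendant V E v"
    using assms(3) unfolding proper_gts_def gts_def Let_def by blast
  interpret tree_path V E P
    using assms(1) P by unfold_locales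
  have uv: "pu = u" "pv = v" using P(4,5) unfolding pu_def pv_def by simp_all
  have "E1 = moved"
    unfolding moved_def unfolding star_edges_def Xv_def pw_def uv E1 by blast
  then show ?thesis
    using max_eigenvalue_complement_moved_gt[OF assms(2) Xu_nonempty Xv_nonempty] nonpendant uv
    unfolding mu1_def max_eigenvalue_def by simp
qed

end
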